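(* Consider the discretized protocol with respect to $G$ with parameter $\epsilon>0$ on an information structure, and suppose turn $t+1$ is Alice's. Fix a realized rectangle $S_t\times T_t$ with $\mathbb P(\sigma\in S_t,\tau\in T_t)>0$, and let "hi" be the event that Alice says "high" at turn $t+1$. Let $\alpha:=\mathbb E[D_G(\mu_{\sigma T_t}\parallel\mu_{S_tT_t})\mathbf 1_{\mathrm{hi}}\mid S_t,T_t]$. Then $\mathbb E[D_G(\mu_{S_{t+1}T_{t+1}}\parallel\mu_{S_tT_t})\mathbf 1_{\mathrm{hi}}\mid S_t,T_t]\ge\frac{\alpha\epsilon}{8M+2\epsilon}$. The analogous statement holds with "low" in place of "high", and likewise when turn $t+1$ is Bob's (with $\mu_{S_t\tau}$ in place of $\mu_{\sigma T_t}$).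
   Context: $G:[0,1]\to\mathbb R$ strictly convex, differentiable on $(0,1)$, $M:=\sup G-\inf G<\infty$; $D_G(y\parallel x)=G(y)-G(x)-(y-x)G'(x)$. An information structure is a tuple $(\Omega,\mathbb P,\mathcal S,\mathcal T,Y)$: a probability space, random variables $\sigma:\Omega\to\mathcal S$ (Alice's signal), $\tau:\Omega\to\mathcal T$ (Bob's signal), $Y:\Omega\to[0,1]$. For measurable $S,T$: $\mu_{\sigma T}=\mathbb E[Y\mid\sigma,\tau\in T]$, $\mu_{S\tau}=\mathbb E[Y\mid\sigma\in S,\tau]$, $\mu_{ST}=\mathbb E[Y\mid\sigma\in S,\tau\in T]$; $\mathbb E[\cdot\mid S,T]$ conditions on $\{\sigma\in S,\tau\in T\}$. In a communication protocol, after $t$ messages the set of signal pairs consistent with the transcript is a rectangle $S_t\times T_t$ ($S_0=\mathcal S$, $T_0=\mathcal T$). Discretized protocol w.r.t. $G$ with parameter $\epsilon$: Alice speaks at odd times, Bob at even times. On Alice's turn $t$, she sends "medium" if $D_G(\mu_{\sigma T_{t-1}}\parallel\mu_{S_{t-1}T_{t-1}})<\epsilon/2$; otherwise "high" if $\mu_{\sigma T_{t-1}}>\mu_{S_{t-1}T_{t-1}}$ and "low" if $\mu_{\sigma T_{t-1}}<\mu_{S_{t-1}T_{t-1}}$. Bob acts analogously with $\mu_{S_{t-1}\tau}$. *)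

theory Defs
  imports "HOL-Probability.Probability"
begin

definition strictly_convex_on :: "real set \<Rightarrow> (real \<Rightarrow> real) \<Rightarrow> bool" where
  "strictly_convex_on S G \<longleftrightarrow> convex S \<and>
     (\<forall>x\<in>S. \<forall>y\<in>S. x \<noteq> y \<longrightarrow> (\<forall>u. 0 < u \<and> u < 1 \<longrightarrow>
        G ((1 - u) * x + u * y) < (1 - u) * G x + u * G y))"

definition DG :: "(real \<Rightarrow> real) \<Rightarrow> real \<Rightarrow> real \<Rightarrow> real" where
  "DG G y x = G y - G x - (y - x) * deriv G x"

definition osc :: "(real \<Rightarrow> real) \<Rightarrow> real" where
  "osc G = (SUP x\<in>{0..1}. G x) - (INF x\<in>{0..1}. G x)"

definition rect :: "'w measure \<Rightarrow> ('w \<Rightarrow> 's) \<Rightarrow> ('w \<Rightarrow> 't) \<Rightarrow> 's set \<Rightarrow> 't set \<Rightarrow> 'w set" where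
  "rect M \<sigma> \<tau> A B = {\<omega> \<in> space M. \<sigma> \<omega> \<in> A \<and> \<tau> \<omega> \<in> B}"

definition condE :: "'w measure \<Rightarrow> ('w \<Rightarrow> real) \<Rightarrow> 'w set \<Rightarrow> real" where
  "condE M X E = (\<integral>\<omega>. X \<omega> * indicator E \<omega> \<partial>M) / measure M E"

text \<open>f is a ([0,1]-valued) version of mu_{sigma T} = E[Y | sigma, tau \<in> T], as a function of
  Alice's signal: the defining property of the conditional expectation given sigma
  on the event {tau \<in> T}.\<close>
definition post_alice :: "'w measure \<Rightarrow> ('w \<Rightarrow> 's) \<Rightarrow> 's measure \<Rightarrow> ('w \<Rightarrow> 't) \<Rightarrow> 't set
     \<Rightarrow> ('w \<Rightarrow> real) \<Rightarrow> ('s \<Rightarrow> real) \<Rightarrow> bool" where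
  "post_alice M \<sigma> SS \<tau> T Y f \<longleftrightarrow> f \<in> borel_measurable SS \<and> (\<forall>s. f s \<in> {0..1}) \<and>
     (\<forall>A\<in>sets SS. (\<integral>\<omega>. Y \<omega> * indicator (rect M \<sigma> \<tau> A T) \<omega> \<partial>M)
                 = (\<integral>\<omega>. f (\<sigma> \<omega>) * indicator (rect M \<sigma> \<tau> A T) \<omega> \<partial>M))"

text \<open>g is a ([0,1]-valued) version of mu_{S tau} = E[Y | sigma \<in> S, tau].\<close>
definition post_bob :: "'w measure \<Rightarrow> ('w \<Rightarrow> 's) \<Rightarrow> 's set \<Rightarrow> ('w \<Rightarrow> 't) \<Rightarrow> 't measure
     \<Rightarrow> ('w \<Rightarrow> real) \<Rightarrow> ('t \<Rightarrow> real) \<Rightarrow> bool" where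
  "post_bob M \<sigma> S \<tau> TT Y g \<longleftrightarrow> g \<in> borel_measurable TT \<and> (\<forall>t. g t \<in> {0..1}) \<and>
     (\<forall>B\<in>sets TT. (\<integral>\<omega>. Y \<omega> * indicator (rect M \<sigma> \<tau> S B) \<omega> \<partial>M)
                 = (\<integral>\<omega>. g (\<tau> \<omega>) * indicator (rect M \<sigma> \<tau> S B) \<omega> \<partial>M))"

datatype msg = Low | Medium | High

text \<open>Message of the discretized protocol: v is the speaker's posterior, c the current
  rectangle mean.\<close>
definition dmsg :: "(real \<Rightarrow> real) \<Rightarrow> real \<Rightarrow> real \<Rightarrow> real \<Rightarrow> msg" where
  "dmsg G \<epsilon> v c = (if DG G v c < \<epsilon> / 2 then Medium else if v > c then High
                    else if v < c then Low else Medium)"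

end

theory Submission
  imports Defs
begin

text \<open>Let \<open>c\<close> be the mean of \<open>Y\<close> on the current rectangle \<open>R\<close>, \<open>F\<close> the speaker's
  posterior and \<open>E \<subseteq> R\<close> the event that a message \<open>m \<in> {High, Low}\<close> is sent; the new rectangle
  mean is \<open>v = E[F | E]\<close>. On \<open>E\<close> all values of \<open>F\<close> lie on one side of \<open>c\<close> with
  \<open>D\<^sub>G(F \<parallel> c) \<ge> \<epsilon>/2\<close>. By convexity \<open>D\<^sub>G(\<cdot> \<parallel> c)\<close> is monotone along rays from \<open>c\<close>, so the
  mean \<open>v\<close> cannot be closer to \<open>c\<close>: \<open>D\<^sub>G(v \<parallel> c) \<ge> \<epsilon>/2\<close>. On the other hand
  \<open>E[D\<^sub>G(F \<parallel> c) | E] = E[G(F) - G(v) | E] + D\<^sub>G(v \<parallel> c) \<le> M + D\<^sub>G(v \<parallel> c)\<close>, and the two bounds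
  give \<open>D\<^sub>G(v \<parallel> c) \<ge> \<epsilon>/(8M + 2\<epsilon>) \<cdot> E[D\<^sub>G(F \<parallel> c) | E]\<close>; multiplying by \<open>P(E | R)\<close> yields
  the claim. Bob's turn is Alice's turn with the two signals exchanged.\<close>

lemma strictly_convex_on_imp_convex_on:
  assumes "strictly_convex_on S G"
  shows "convex_on S G"
proof
  show "convex S" using assms by (simp add: strictly_convex_on_def)
  fix t :: real and x y assume "0 < t" "t < 1" "x \<in> S" "y \<in> S"
  then show "G ((1 - t) *\<^sub>R x + t *\<^sub>R y) \<le> (1 - t) * G x + t * G y"
  proof (cases "x = y")
    case False
    then show ?thesis
      using assms \<open>0 < t\<close> \<open>t < 1\<close> \<open>x \<in> S\<close> \<open>y \<in> S\<close>
      unfolding strictly_convex_on_def by (simp add: less_imp_le)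
  qed (simp add: algebra_simps)
qed

text \<open>Only convexity enters: the tangent term of \<open>DG\<close> is affine along the segment,
  whatever value \<open>deriv G c\<close> takes (it is junk at \<open>c \<in> {0, 1}\<close>).\<close>

lemma DG_convex_combination_le:
  assumes "convex_on S G" "c \<in> S" "y \<in> S" "0 \<le> u" "u \<le> 1"
  shows "DG G ((1 - u) * c + u * y) c \<le> u * DG G y c"
proof -
  have "G ((1 - u) * c + u * y) \<le> (1 - u) * G c + u * G y"
    using convex_onD[OF assms(1)] assms(2-5) by simp
  then show ?thesis unfolding DG_def by (simp add: algebra_simps)
qed

lemma DG_less_on_closed_segment:
  assumes "convex_on S G" "c \<in> S" "y \<in> S" "x \<in> closed_segment c y"
    and "DG G y c < \<delta>" "0 < \<delta>"
  shows "DG G x c < \<delta>"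
proof -
  obtain u where u: "0 \<le> u" "u \<le> 1" "x = (1 - u) * c + u * y"
    using assms(4) by (auto simp: closed_segment_def)
  have "u * DG G y c < \<delta>"
  proof (cases "DG G y c \<ge> 0")
    case True
    then show ?thesis using u assms(5) mult_left_le_one_le[of "DG G y c" u] by linarith
  next
    case False
    then show ?thesis using u assms(6) mult_nonneg_nonpos[of u "DG G y c"] by linarith
  qed
  then show ?thesis using DG_convex_combination_le[OF assms(1-3) u(1,2)] u(3) by simp
qed

lemma osc_ge_diff:
  assumes "bdd_above (G ` {0..1})" "bdd_below (G ` {0..1})" "x \<in> {0..1}" "y \<in> {0..1}"
  shows "G x - G y \<le> osc G"
  unfolding osc_def using cSUP_upper[OF assms(3,1)] cINF_lower[OF assms(2,4)] by linarith

lemma gain_ratio_le: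
  fixes D K \<epsilon> :: real
  assumes "\<epsilon> / 2 \<le> D" "0 \<le> K" "0 < \<epsilon>"
  shows "(D + K) * (\<epsilon> / (8 * K + 2 * \<epsilon>)) \<le> D"
proof -
  have "K * \<epsilon> \<le> \<epsilon> / 2 * (8 * K + \<epsilon>)"
    using assms(2,3) by (simp add: algebra_simps)
  also have "\<dots> \<le> D * (8 * K + \<epsilon>)"
    using assms by (intro mult_right_mono) auto
  finally have "(D + K) * \<epsilon> \<le> D * (8 * K + 2 * \<epsilon>)"
    by (simp add: algebra_simps)
  moreover have "0 < 8 * K + 2 * \<epsilon>" using assms(2,3) by simp
  ultimately show ?thesis by (simp add: pos_divide_le_eq)
qed

lemma borel_measurable_comp_unit_interval:
  fixes G :: "real \<Rightarrow> real"
  assumes "continuous_on {0<..<1} G" "F \<in> borel_measurable N" "\<forall>x\<in>space N. F x \<in> {0..1}"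
  shows "(\<lambda>x. G (F x)) \<in> borel_measurable N"
proof -
  define g where "g y = indicator {0<..<1} y *\<^sub>R G y + indicator {0} y * G 0 + indicator {1} y * G 1"
    for y :: real
  have "g \<in> borel_measurable borel"
    unfolding g_def
    by (intro borel_measurable_add borel_measurable_continuous_on_indicator assms(1)) auto
  then have "(\<lambda>x. g (F x)) \<in> borel_measurable N"
    using measurable_compose[OF assms(2)] by blast
  moreover have "g (F x) = G (F x)" if "x \<in> space N" for x
    using assms(3) that by (force simp: g_def indicator_def)
  ultimately show ?thesis
    using measurable_cong[of N "\<lambda>x. G (F x)" "\<lambda>x. g (F x)"] by simp
qed

lemma sets_dmsg_eq:
  assumes [measurable]: "F \<in> borel_measurable N" "(\<lambda>x. G (F x)) \<in> borel_measurable N"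
  shows "{x \<in> space N. dmsg G \<epsilon> (F x) c = m} \<in> sets N"
proof -
  have "(\<lambda>x. dmsg G \<epsilon> (F x) c) \<in> N \<rightarrow>\<^sub>M count_space UNIV"
    unfolding dmsg_def DG_def by measurable
  then show ?thesis by measurable
qed

lemma condE_mult_indicator:
  "condE M (\<lambda>\<omega>. X \<omega> * indicator H \<omega>) R = (\<integral>\<omega>. X \<omega> * indicator (R \<inter> H) \<omega> \<partial>M) / measure M R"
  unfolding condE_def by (simp add: indicator_inter_arith mult_ac)

context finite_measure
begin

lemma condE_in_unit_interval:
  assumes "X \<in> borel_measurable M" "\<forall>\<omega>\<in>space M. X \<omega> \<in> {0..1}" "E \<in> sets M"
  shows "condE M X E \<in> {0..1}"
proof -
  have "integrable M X"
    using assms(1,2) by (intro integrable_const_bound[of _ 1]) auto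
  then have "(\<integral>\<omega>. X \<omega> * indicator E \<omega> \<partial>M) \<le> (\<integral>\<omega>. indicator E \<omega> \<partial>M)"
    using assms(2,3)
    by (intro integral_mono integrable_real_mult_indicator integrable_real_indicator)
       (auto simp: indicator_def less_top[symmetric])
  moreover have "0 \<le> (\<integral>\<omega>. X \<omega> * indicator E \<omega> \<partial>M)"
    using assms(2) by (intro Bochner_Integration.integral_nonneg) (auto simp: indicator_def)
  ultimately show ?thesis
    using assms(3) by (auto simp: condE_def divide_le_eq_1)
qed

lemma less_integral_mult_indicator:
  assumes "integrable M X" "E \<in> sets M" "measure M E > 0" "\<forall>\<omega>\<in>E. a < X \<omega>"
  shows "a * measure M E < (\<integral>\<omega>. X \<omega> * indicator E \<omega> \<partial>M)"
proof -
  have "(\<integral>\<omega>. a * indicator E \<omega> \<partial>M) < (\<integral>\<omega>. X \<omega> * indicator E \<omega> \<partial>M)"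
    using assms
    by (intro integral_less_AE[where A = E] integrable_real_mult_indicator integrable_mult_right
          integrable_real_indicator AE_I2)
       (auto simp: indicator_def emeasure_eq_measure less_imp_le)
  then show ?thesis using assms(2) by simp
qed

lemma integral_mult_indicator_less:
  assumes "integrable M X" "E \<in> sets M" "measure M E > 0" "\<forall>\<omega>\<in>E. X \<omega> < a"
  shows "(\<integral>\<omega>. X \<omega> * indicator E \<omega> \<partial>M) < a * measure M E"
  using less_integral_mult_indicator[of "\<lambda>\<omega>. - X \<omega>" E "- a"] assms by simp

text \<open>If \<open>v\<close> were within \<open>\<epsilon>/2\<close> of \<open>c\<close>, every value \<open>F \<omega>\<close> would lie strictly beyond \<open>v\<close>
  as seen from \<open>c\<close>, which is impossible for their mean.\<close>

lemma DG_condE_ge_of_one_sided: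
  assumes G: "convex_on {0..1} G" and "0 < \<epsilon>"
    and F: "F \<in> borel_measurable M" "\<forall>\<omega>\<in>space M. F \<omega> \<in> {0..1}"
    and E: "E \<in> sets M" "measure M E > 0" and c: "c \<in> {0..1}"
    and far: "\<forall>\<omega>\<in>E. \<epsilon> / 2 \<le> DG G (F \<omega>) c"
    and one_sided: "(\<forall>\<omega>\<in>E. c < F \<omega>) \<or> (\<forall>\<omega>\<in>E. F \<omega> < c)"
  shows "\<epsilon> / 2 \<le> DG G (condE M F E) c"
proof (rule ccontr)
  define v where "v = condE M F E"
  assume "\<not> \<epsilon> / 2 \<le> DG G (condE M F E) c"
  then have near: "DG G v c < \<epsilon> / 2" by (simp add: v_def)
  have v: "v \<in> {0..1}" unfolding v_def using condE_in_unit_interval F E(1) .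
  have mean: "(\<integral>\<omega>. F \<omega> * indicator E \<omega> \<partial>M) = v * measure M E"
    using E(2) by (simp add: v_def condE_def)
  have outside: "F \<omega> \<notin> closed_segment c v" if "\<omega> \<in> E" for \<omega>
    using DG_less_on_closed_segment[OF G c v _ near] far that \<open>0 < \<epsilon>\<close> by force
  have intF: "integrable M F"
    using F by (intro integrable_const_bound[of _ 1]) auto
  from one_sided show False
  proof
    assume "\<forall>\<omega>\<in>E. c < F \<omega>"
    then have "\<forall>\<omega>\<in>E. v < F \<omega>"
      using outside by (fastforce simp: closed_segment_eq_real_ivl split: if_split_asm)
    then show False using less_integral_mult_indicator[OF intF E, of v] mean by simp
  next
    assume "\<forall>\<omega>\<in>E. F \<omega> < c"
    then have "\<forall>\<omega>\<in>E. F \<omega> < v"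
      using outside by (fastforce simp: closed_segment_eq_real_ivl split: if_split_asm)
    then show False using integral_mult_indicator_less[OF intF E, of v] mean by simp
  qed
qed

lemma integral_DG_mult_indicator:
  assumes "integrable M F" "integrable M (\<lambda>\<omega>. G (F \<omega>))" "E \<in> sets M" "measure M E > 0"
  shows "(\<integral>\<omega>. DG G (F \<omega>) c * indicator E \<omega> \<partial>M)
       = (\<integral>\<omega>. (G (F \<omega>) - G (condE M F E)) * indicator E \<omega> \<partial>M) + DG G (condE M F E) c * measure M E"
proof -
  define v where "v = condE M F E"
  have mean: "(\<integral>\<omega>. F \<omega> * indicator E \<omega> \<partial>M) = v * measure M E"
    using assms(4) by (simp add: v_def condE_def)
  have "(\<integral>\<omega>. DG G (F \<omega>) c * indicator E \<omega> \<partial>M)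
      = (\<integral>\<omega>. (G (F \<omega>) - G v) * indicator E \<omega>
             + (G v - G c + c * deriv G c) * indicator E \<omega>
             - deriv G c * (F \<omega> * indicator E \<omega>) \<partial>M)"
    unfolding DG_def by (rule Bochner_Integration.integral_cong) (simp_all add: algebra_simps)
  also have "\<dots> = (\<integral>\<omega>. (G (F \<omega>) - G v) * indicator E \<omega> \<partial>M)
      + (G v - G c + c * deriv G c) * measure M E - deriv G c * (v * measure M E)"
  proof -
    have "integrable M (\<lambda>\<omega>. (G (F \<omega>) - G v) * indicator E \<omega>)"
      using assms(1-3) by (intro integrable_real_mult_indicator) auto
    moreover have "integrable M (\<lambda>\<omega>. (G v - G c + c * deriv G c) * indicator E \<omega>)"
      using assms(3) by (intro integrable_real_mult_indicator) auto
    moreover have "integrable M (\<lambda>\<omega>. deriv G c * (F \<omega> * indicator E \<omega>))"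
      using assms(1,3) by (intro integrable_mult_right integrable_real_mult_indicator)
    ultimately show ?thesis
      using assms(3) mean by simp
  qed
  also have "\<dots> = (\<integral>\<omega>. (G (F \<omega>) - G v) * indicator E \<omega> \<partial>M) + DG G v c * measure M E"
    unfolding DG_def by (simp add: algebra_simps)
  finally show ?thesis unfolding v_def .
qed

lemma message_event_gain:
  assumes G: "convex_on {0..1} G" "bdd_above (G ` {0..1})" "bdd_below (G ` {0..1})"
    and \<epsilon>: "0 < \<epsilon>" and m: "m \<in> {High, Low}"
    and F: "F \<in> borel_measurable M" "\<forall>\<omega>\<in>space M. F \<omega> \<in> {0..1}"
      "(\<lambda>\<omega>. G (F \<omega>)) \<in> borel_measurable M"
    and R: "R \<in> sets M" and c: "c \<in> {0..1}"
    and H: "H = {\<omega> \<in> space M. dmsg G \<epsilon> (F \<omega>) c = m}"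
    and V: "\<And>\<omega>. \<omega> \<in> H \<Longrightarrow> V \<omega> = condE M F (R \<inter> H)"
  shows "condE M (\<lambda>\<omega>. DG G (F \<omega>) c * indicator H \<omega>) R * \<epsilon> / (8 * osc G + 2 * \<epsilon>)
       \<le> condE M (\<lambda>\<omega>. DG G (V \<omega>) c * indicator H \<omega>) R"
proof -
  define E where "E = R \<inter> H"
  define v where "v = condE M F E"
  define k where "k = \<epsilon> / (8 * osc G + 2 * \<epsilon>)"
  define I where "I = (\<integral>\<omega>. DG G (F \<omega>) c * indicator E \<omega> \<partial>M)"
  have E: "E \<in> sets M" unfolding E_def H using R sets_dmsg_eq[OF F(1,3)] by blast
  have osc: "0 \<le> osc G" using osc_ge_diff[OF G(2,3), of 0 0] by simp
  have "(\<lambda>\<omega>. DG G (V \<omega>) c * indicator H \<omega>) = (\<lambda>\<omega>. DG G v c * indicator H \<omega>)"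
    using V by (auto simp: indicator_def v_def E_def)
  then have lhs: "condE M (\<lambda>\<omega>. DG G (V \<omega>) c * indicator H \<omega>) R = DG G v c * measure M E / measure M R"
    using E by (simp add: condE_mult_indicator E_def)
  have rhs: "condE M (\<lambda>\<omega>. DG G (F \<omega>) c * indicator H \<omega>) R = I / measure M R"
    by (simp add: condE_mult_indicator I_def E_def)
  have "I * k \<le> DG G v c * measure M E"
  proof (cases "measure M E = 0")
    case True
    then have "AE \<omega> in M. \<omega> \<notin> E"
      using E by (intro AE_not_in null_setsI) (simp_all add: emeasure_eq_measure)
    then have "I = 0" unfolding I_def by (intro integral_eq_zero_AE) (auto elim!: eventually_mono)
    then show ?thesis using True by simp
  next
    case False
    then have PE: "measure M E > 0" by (simp add: zero_less_measure_iff)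
    have intF: "integrable M F" using F(1,2) by (intro integrable_const_bound[of _ 1]) auto
    have "\<bar>G (F \<omega>)\<bar> \<le> \<bar>G 0\<bar> + osc G" if "\<omega> \<in> space M" for \<omega>
      using osc_ge_diff[OF G(2,3), of "F \<omega>" 0] osc_ge_diff[OF G(2,3), of 0 "F \<omega>"] F(2) that
      by (auto simp: abs_le_iff)
    then have intGF: "integrable M (\<lambda>\<omega>. G (F \<omega>))"
      using F(3) by (intro integrable_const_bound[of _ "\<bar>G 0\<bar> + osc G"]) auto
    have on_E: "\<epsilon> / 2 \<le> DG G (F \<omega>) c \<and> (if m = High then c < F \<omega> else F \<omega> < c)" if "\<omega> \<in> E" for \<omega>
      using that m by (auto simp: E_def H dmsg_def split: if_splits)
    have far: "\<epsilon> / 2 \<le> DG G v c"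
      unfolding v_def using on_E m
      by (intro DG_condE_ge_of_one_sided[OF G(1) \<epsilon> F(1,2) E PE c]) auto
    have "(\<integral>\<omega>. (G (F \<omega>) - G v) * indicator E \<omega> \<partial>M) \<le> (\<integral>\<omega>. osc G * indicator E \<omega> \<partial>M)"
      using E intGF F(2) osc_ge_diff[OF G(2,3)] condE_in_unit_interval[OF F(1,2) E]
      by (intro integral_mono integrable_real_mult_indicator) (auto simp: indicator_def v_def)
    then have I: "I \<le> (DG G v c + osc G) * measure M E"
      using integral_DG_mult_indicator[OF intF intGF E PE, of c] E
      by (simp add: I_def v_def algebra_simps)
    have "0 \<le> k" using \<epsilon> osc by (simp add: k_def)
    then have "I * k \<le> (DG G v c + osc G) * k * measure M E"
      using mult_right_mono[OF I, of k] by (simp add: mult_ac)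
    also have "\<dots> \<le> DG G v c * measure M E"
      using gain_ratio_le[OF far osc \<epsilon>] by (intro mult_right_mono) (auto simp: k_def)
    finally show ?thesis .
  qed
  then have "I * k / measure M R \<le> DG G v c * measure M E / measure M R"
    by (simp add: divide_right_mono)
  then show ?thesis
    unfolding lhs rhs by (simp add: k_def mult.commute)
qed

end

lemma rect_in_sets:
  assumes "\<sigma> \<in> M \<rightarrow>\<^sub>M SS" "\<tau> \<in> M \<rightarrow>\<^sub>M TT" "A \<in> sets SS" "B \<in> sets TT"
  shows "rect M \<sigma> \<tau> A B \<in> sets M"
proof -
  have "rect M \<sigma> \<tau> A B = (\<sigma> -` A \<inter> space M) \<inter> (\<tau> -` B \<inter> space M)"
    by (auto simp: rect_def)
  then show ?thesis using measurable_sets[OF assms(1,3)] measurable_sets[OF assms(2,4)] by auto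
qed

lemma post_alice_condE:
  "post_alice M \<sigma> SS \<tau> T Y f \<Longrightarrow> A \<in> sets SS
   \<Longrightarrow> condE M Y (rect M \<sigma> \<tau> A T) = condE M (\<lambda>\<omega>. f (\<sigma> \<omega>)) (rect M \<sigma> \<tau> A T)"
  by (simp add: post_alice_def condE_def)

lemma rect_swap: "rect M \<tau> \<sigma> B A = rect M \<sigma> \<tau> A B"
  by (auto simp: rect_def)

lemma post_bob_iff_post_alice: "post_bob M \<sigma> S \<tau> TT Y g \<longleftrightarrow> post_alice M \<tau> TT \<sigma> S Y g"
  by (simp only: post_bob_def post_alice_def rect_swap[of M \<tau> \<sigma>])

lemma alice_message_gain:
  assumes M: "finite_measure M" "\<sigma> \<in> M \<rightarrow>\<^sub>M SS" "\<tau> \<in> M \<rightarrow>\<^sub>M TT"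
    and Y: "Y \<in> borel_measurable M" "\<forall>\<omega>\<in>space M. Y \<omega> \<in> {0..1}"
    and G: "convex_on {0..1} G" "continuous_on {0<..<1} G"
      "bdd_above (G ` {0..1})" "bdd_below (G ` {0..1})"
    and \<epsilon>: "0 < \<epsilon>" and m: "m \<in> {High, Low}"
    and St: "St \<in> sets SS" and Tt: "Tt \<in> sets TT"
    and f: "post_alice M \<sigma> SS \<tau> Tt Y f"
  defines "R \<equiv> rect M \<sigma> \<tau> St Tt"
  defines "c \<equiv> condE M Y R"
  shows "condE M (\<lambda>\<omega>. DG G (condE M Y (rect M \<sigma> \<tau>
                 {s\<in>St. dmsg G \<epsilon> (f s) c = dmsg G \<epsilon> (f (\<sigma> \<omega>)) c} Tt)) c
               * indicator {\<omega>'\<in>space M. dmsg G \<epsilon> (f (\<sigma> \<omega>')) c = m} \<omega>) R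
       \<ge> condE M (\<lambda>\<omega>. DG G (f (\<sigma> \<omega>)) c
               * indicator {\<omega>'\<in>space M. dmsg G \<epsilon> (f (\<sigma> \<omega>')) c = m} \<omega>) R
         * \<epsilon> / (8 * osc G + 2 * \<epsilon>)"
proof -
  interpret finite_measure M by (rule M(1))
  have f_meas: "f \<in> borel_measurable SS" and f_unit: "\<forall>s. f s \<in> {0..1}"
    using f by (auto simp: post_alice_def)
  have Gf: "(\<lambda>s. G (f s)) \<in> borel_measurable SS"
    using borel_measurable_comp_unit_interval[OF G(2) f_meas] f_unit by blast
  define A where "A = {s \<in> St. dmsg G \<epsilon> (f s) c = m}"
  have "A = St \<inter> {s \<in> space SS. dmsg G \<epsilon> (f s) c = m}"
    using sets.sets_into_space[OF St] by (auto simp: A_def)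
  then have A: "A \<in> sets SS" using St sets_dmsg_eq[OF f_meas Gf] by auto
  define H where "H = {\<omega> \<in> space M. dmsg G \<epsilon> (f (\<sigma> \<omega>)) c = m}"
  have RH: "R \<inter> H = rect M \<sigma> \<tau> A Tt" by (auto simp: R_def H_def A_def rect_def)
  show ?thesis
    unfolding H_def[symmetric]
  proof (rule message_event_gain[OF G(1,3,4) \<epsilon> m])
    show "(\<lambda>\<omega>. f (\<sigma> \<omega>)) \<in> borel_measurable M" "(\<lambda>\<omega>. G (f (\<sigma> \<omega>))) \<in> borel_measurable M"
      using measurable_compose[OF M(2) f_meas] measurable_compose[OF M(2) Gf] by auto
    show "\<forall>\<omega>\<in>space M. f (\<sigma> \<omega>) \<in> {0..1}" using f_unit by blast
    show "R \<in> sets M" unfolding R_def using rect_in_sets[OF M(2,3) St Tt] .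
    show "c \<in> {0..1}"
      unfolding c_def using condE_in_unit_interval[OF Y] \<open>R \<in> sets M\<close> .
    show "H = {\<omega> \<in> space M. dmsg G \<epsilon> (f (\<sigma> \<omega>)) c = m}" by (rule H_def)
    show "condE M Y (rect M \<sigma> \<tau> {s \<in> St. dmsg G \<epsilon> (f s) c = dmsg G \<epsilon> (f (\<sigma> \<omega>)) c} Tt)
          = condE M (\<lambda>\<omega>. f (\<sigma> \<omega>)) (R \<inter> H)" if "\<omega> \<in> H" for \<omega>
      using that post_alice_condE[OF f A] unfolding RH by (simp add: H_def A_def)
  qed
qed

lemma bob_message_gain:
  assumes M: "finite_measure M" "\<sigma> \<in> M \<rightarrow>\<^sub>M SS" "\<tau> \<in> M \<rightarrow>\<^sub>M TT"
    and Y: "Y \<in> borel_measurable M" "\<forall>\<omega>\<in>space M. Y \<omega> \<in> {0..1}"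
    and G: "convex_on {0..1} G" "continuous_on {0<..<1} G"
      "bdd_above (G ` {0..1})" "bdd_below (G ` {0..1})"
    and \<epsilon>: "0 < \<epsilon>" and m: "m \<in> {High, Low}"
    and St: "St \<in> sets SS" and Tt: "Tt \<in> sets TT"
    and g: "post_bob M \<sigma> St \<tau> TT Y g"
  defines "R \<equiv> rect M \<sigma> \<tau> St Tt"
  defines "c \<equiv> condE M Y R"
  shows "condE M (\<lambda>\<omega>. DG G (condE M Y (rect M \<sigma> \<tau> St
                 {t\<in>Tt. dmsg G \<epsilon> (g t) c = dmsg G \<epsilon> (g (\<tau> \<omega>)) c})) c
               * indicator {\<omega>'\<in>space M. dmsg G \<epsilon> (g (\<tau> \<omega>')) c = m} \<omega>) R
       \<ge> condE M (\<lambda>\<omega>. DG G (g (\<tau> \<omega>)) c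
               * indicator {\<omega>'\<in>space M. dmsg G \<epsilon> (g (\<tau> \<omega>')) c = m} \<omega>) R
         * \<epsilon> / (8 * osc G + 2 * \<epsilon>)"
  using alice_message_gain[OF M(1,3,2) Y G \<epsilon> m Tt St g[unfolded post_bob_iff_post_alice]]
  unfolding R_def c_def by (simp only: rect_swap[of M \<tau> \<sigma>])

theorem lemmaC2:
  fixes M :: "'w measure" and SS :: "'s measure" and TT :: "'t measure"
    and \<sigma> :: "'w \<Rightarrow> 's" and \<tau> :: "'w \<Rightarrow> 't" and Y :: "'w \<Rightarrow> real"
    and G :: "real \<Rightarrow> real" and \<epsilon> :: real and St :: "'s set" and Tt :: "'t set"
  assumes "prob_space M"
    and "\<sigma> \<in> M \<rightarrow>\<^sub>M SS" and "\<tau> \<in> M \<rightarrow>\<^sub>M TT" and "Y \<in> borel_measurable M"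
    and "\<forall>\<omega>\<in>space M. Y \<omega> \<in> {0..1}"
    and "strictly_convex_on {0..1} G" and "G differentiable_on {0<..<1}"
    and "bdd_above (G ` {0..1})" and "bdd_below (G ` {0..1})"
    and "\<epsilon> > 0"
    and "St \<in> sets SS" and "Tt \<in> sets TT"
    and "measure M (rect M \<sigma> \<tau> St Tt) > 0"
  shows
    "(\<forall>f. post_alice M \<sigma> SS \<tau> Tt Y f \<longrightarrow>
       (\<forall>m\<in>{High, Low}.
          condE M (\<lambda>\<omega>. DG G (condE M Y (rect M \<sigma> \<tau>
                      {s\<in>St. dmsg G \<epsilon> (f s) (condE M Y (rect M \<sigma> \<tau> St Tt))
                              = dmsg G \<epsilon> (f (\<sigma> \<omega>)) (condE M Y (rect M \<sigma> \<tau> St Tt))} Tt))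
                      (condE M Y (rect M \<sigma> \<tau> St Tt))
                   * indicator {\<omega>'\<in>space M. dmsg G \<epsilon> (f (\<sigma> \<omega>')) (condE M Y (rect M \<sigma> \<tau> St Tt)) = m} \<omega>)
             (rect M \<sigma> \<tau> St Tt)
          \<ge> condE M (\<lambda>\<omega>. DG G (f (\<sigma> \<omega>)) (condE M Y (rect M \<sigma> \<tau> St Tt))
                   * indicator {\<omega>'\<in>space M. dmsg G \<epsilon> (f (\<sigma> \<omega>')) (condE M Y (rect M \<sigma> \<tau> St Tt)) = m} \<omega>)
             (rect M \<sigma> \<tau> St Tt) * \<epsilon> / (8 * osc G + 2 * \<epsilon>)))
   \<and>
    (\<forall>g. post_bob M \<sigma> St \<tau> TT Y g \<longrightarrow>
       (\<forall>m\<in>{High, Low}.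
          condE M (\<lambda>\<omega>. DG G (condE M Y (rect M \<sigma> \<tau> St
                      {t\<in>Tt. dmsg G \<epsilon> (g t) (condE M Y (rect M \<sigma> \<tau> St Tt))
                              = dmsg G \<epsilon> (g (\<tau> \<omega>)) (condE M Y (rect M \<sigma> \<tau> St Tt))}))
                      (condE M Y (rect M \<sigma> \<tau> St Tt))
                   * indicator {\<omega>'\<in>space M. dmsg G \<epsilon> (g (\<tau> \<omega>')) (condE M Y (rect M \<sigma> \<tau> St Tt)) = m} \<omega>)
             (rect M \<sigma> \<tau> St Tt)
          \<ge> condE M (\<lambda>\<omega>. DG G (g (\<tau> \<omega>)) (condE M Y (rect M \<sigma> \<tau> St Tt))
                   * indicator {\<omega>'\<in>space M. dmsg G \<epsilon> (g (\<tau> \<omega>')) (condE M Y (rect M \<sigma> \<tau> St Tt)) = m} \<omega>)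
             (rect M \<sigma> \<tau> St Tt) * \<epsilon> / (8 * osc G + 2 * \<epsilon>)))"
proof -
  have M: "finite_measure M" using assms(1) by (rule prob_space.axioms)
  have G: "convex_on {0..1} G" "continuous_on {0<..<1} G"
    using strictly_convex_on_imp_convex_on[OF assms(6)] differentiable_imp_continuous_on[OF assms(7)]
    by auto
  show ?thesis
    by (intro conjI allI impI ballI alice_message_gain[OF M assms(2-5) G assms(8-10) _ assms(11,12)]
        bob_message_gain[OF M assms(2-5) G assms(8-10) _ assms(11,12)])
qed

end
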